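(* Let $A_1,B_1,A_2,B_2$ be groups with $A_1\cap B_1=A_2\cap B_2=\{1\}$. If $\mathcal{F}(A_1)\equiv\mathcal{F}(A_2)$ and $\mathcal{F}(B_1)\equiv\mathcal{F}(B_2)$ (with respect to the language of groups), then the free products $A_1*B_1$ and $A_2*B_2$ are existentially equivalent in the language of groups.
   Context: The language of groups has a constant $1$, a binary function $\cdot$ and a unary function $^{-1}$. For structures $\mathcal{M},\mathcal{N}$ in a language $\mathcal{L}$, an $\mathcal{L}$-isomorphism between subsets $S\subseteq M$, $T\subseteq N$ is a bijection $\phi:S\to T$ such that $\phi$ and $\phi^{-1}$ preserve constants lying in the set, preserve relations on tuples from the set, and satisfy $\phi(f(s_1,\dots,s_n))=f(\phi(s_1),\dots,\phi(s_n))$ whenever $s_i\in S$ and $f(s_1,\dots,s_n)\in S$ (and symmetrically for $\phi^{-1}$). $\mathcal{F}(\mathcal{M})\equiv\mathcal{F}(\mathcal{N})$ means that there is a bijection $\theta$ between the sets of $\mathcal{L}$-isomorphism classes of finite subsets of $M$ and of $N$ with $S\cong_\mathcal{L}T$ whenever $\theta([S])=[T]$; equivalently every finite subset of either structure is $\mathcal{L}$-isomorphic to a finite subset of the other. Existential equivalence means satisfying the same existential sentences. *)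

theory Defs
  imports "HOL-Algebra.Group"
begin

datatype gterm = GVar nat | GOne | GMul gterm gterm | GInv gterm

datatype gqf = GEq gterm gterm | GNeg gqf | GConj gqf gqf | GDisj gqf gqf

fun geval :: "('c, 'z) monoid_scheme \<Rightarrow> (nat \<Rightarrow> 'c) \<Rightarrow> gterm \<Rightarrow> 'c" where
  "geval G \<rho> (GVar n) = \<rho> n"
| "geval G \<rho> GOne = \<one>\<^bsub>G\<^esub>"
| "geval G \<rho> (GMul s t) = geval G \<rho> s \<otimes>\<^bsub>G\<^esub> geval G \<rho> t"
| "geval G \<rho> (GInv t) = inv\<^bsub>G\<^esub> (geval G \<rho> t)"

fun gsat :: "('c, 'z) monoid_scheme \<Rightarrow> (nat \<Rightarrow> 'c) \<Rightarrow> gqf \<Rightarrow> bool" where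
  "gsat G \<rho> (GEq s t) = (geval G \<rho> s = geval G \<rho> t)"
| "gsat G \<rho> (GNeg \<phi>) = (\<not> gsat G \<rho> \<phi>)"
| "gsat G \<rho> (GConj \<phi> \<psi>) = (gsat G \<rho> \<phi> \<and> gsat G \<rho> \<psi>)"
| "gsat G \<rho> (GDisj \<phi> \<psi>) = (gsat G \<rho> \<phi> \<or> gsat G \<rho> \<psi>)"

text \<open>An existential sentence is \<open>\<exists>x1 ... xn. \<phi>\<close> with \<open>\<phi>\<close> quantifier-free and all
  variables of \<open>\<phi>\<close> among the bound ones; it holds iff some assignment of the
  variables to elements of the carrier satisfies \<open>\<phi>\<close>.\<close>

definition ex_holds :: "('c, 'z) monoid_scheme \<Rightarrow> gqf \<Rightarrow> bool" where
  "ex_holds G \<phi> \<longleftrightarrow> (\<exists>\<rho>. (\<forall>n. \<rho> n \<in> carrier G) \<and> gsat G \<rho> \<phi>)"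

definition existentially_equivalent ::
  "('c, 'z) monoid_scheme \<Rightarrow> ('d, 'y) monoid_scheme \<Rightarrow> bool" where
  "existentially_equivalent G H \<longleftrightarrow> (\<forall>\<phi>. ex_holds G \<phi> \<longleftrightarrow> ex_holds H \<phi>)"

definition preserves_on ::
  "('c, 'z) monoid_scheme \<Rightarrow> ('d, 'y) monoid_scheme \<Rightarrow> 'c set \<Rightarrow> ('c \<Rightarrow> 'd) \<Rightarrow> bool" where
  "preserves_on G H S f \<longleftrightarrow>
     (\<one>\<^bsub>G\<^esub> \<in> S \<longrightarrow> f \<one>\<^bsub>G\<^esub> = \<one>\<^bsub>H\<^esub>) \<and>
     (\<forall>x\<in>S. \<forall>y\<in>S. x \<otimes>\<^bsub>G\<^esub> y \<in> S \<longrightarrow> f (x \<otimes>\<^bsub>G\<^esub> y) = f x \<otimes>\<^bsub>H\<^esub> f y) \<and>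
     (\<forall>x\<in>S. inv\<^bsub>G\<^esub> x \<in> S \<longrightarrow> f (inv\<^bsub>G\<^esub> x) = inv\<^bsub>H\<^esub> (f x))"

definition partial_iso ::
  "('c, 'z) monoid_scheme \<Rightarrow> ('d, 'y) monoid_scheme \<Rightarrow> 'c set \<Rightarrow> 'd set \<Rightarrow> ('c \<Rightarrow> 'd) \<Rightarrow> bool" where
  "partial_iso G H S T f \<longleftrightarrow>
     S \<subseteq> carrier G \<and> T \<subseteq> carrier H \<and> bij_betw f S T \<and>
     preserves_on G H S f \<and> preserves_on H G T (inv_into S f)"

definition fin_equiv :: "('c, 'z) monoid_scheme \<Rightarrow> ('d, 'y) monoid_scheme \<Rightarrow> bool" where
  "fin_equiv G H \<longleftrightarrow>
     (\<forall>S. S \<subseteq> carrier G \<and> finite S \<longrightarrow> (\<exists>T f. partial_iso G H S T f)) \<and>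
     (\<forall>T. T \<subseteq> carrier H \<and> finite T \<longrightarrow> (\<exists>S g. partial_iso H G T S g))"

definition same_factor :: "'a monoid \<Rightarrow> 'a monoid \<Rightarrow> 'a \<Rightarrow> 'a \<Rightarrow> bool" where
  "same_factor A B x y \<longleftrightarrow>
     (x \<in> carrier A \<and> y \<in> carrier A) \<or> (x \<in> carrier B \<and> y \<in> carrier B)"

definition reduced_word :: "'a monoid \<Rightarrow> 'a monoid \<Rightarrow> 'a list \<Rightarrow> bool" where
  "reduced_word A B w \<longleftrightarrow>
     set w \<subseteq> (carrier A \<union> carrier B) - {\<one>\<^bsub>A\<^esub>} \<and>
     successively (\<lambda>x y. \<not> same_factor A B x y) w"

definition fp_cons :: "'a monoid \<Rightarrow> 'a monoid \<Rightarrow> 'a \<Rightarrow> 'a list \<Rightarrow> 'a list" where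
  "fp_cons A B x w =
     (if x = \<one>\<^bsub>A\<^esub> then w
      else (case w of
              [] \<Rightarrow> [x]
            | y # w' \<Rightarrow>
                if x \<in> carrier A \<and> y \<in> carrier A then
                  (let z = x \<otimes>\<^bsub>A\<^esub> y in if z = \<one>\<^bsub>A\<^esub> then w' else z # w')
                else if x \<in> carrier B \<and> y \<in> carrier B then
                  (let z = x \<otimes>\<^bsub>B\<^esub> y in if z = \<one>\<^bsub>B\<^esub> then w' else z # w')
                else x # w))"

definition free_product :: "'a monoid \<Rightarrow> 'a monoid \<Rightarrow> 'a list monoid" where
  "free_product A B =
     \<lparr> carrier = {w. reduced_word A B w},
       mult = (\<lambda>u v. foldr (fp_cons A B) u v),
       one = [] \<rparr>"

end

theory Submission
  imports Defs
begin

text \<open>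
  Idea: suppose an existential sentence with quantifier-free matrix \<open>\<phi>\<close> holds in \<open>A1 * B1\<close>,
  witnessed by reduced words \<open>\<rho> n\<close>.  Evaluating \<open>\<phi>\<close> in the normal-form model of the free
  product only ever touches finitely many letters (the letters of the values, of all
  intermediate words of products, and of inverted letters).  Choose partial isomorphisms
  \<open>A1 \<rightharpoonup> A2\<close>, \<open>B1 \<rightharpoonup> B2\<close> on these letters and glue them to one letter map \<open>h\<close>; applying \<open>h\<close>
  letterwise commutes with every step of the evaluation, so the transported words witness the
  sentence in \<open>A2 * B2\<close>.  By symmetry the converse holds as well.
\<close>

lemma reduced_word_Nil [simp]: "reduced_word A B []"
  by (simp add: reduced_word_def)

lemma reduced_word_Cons:
  "reduced_word A B (x # w) \<longleftrightarrow>
     x \<in> (carrier A \<union> carrier B) - {\<one>\<^bsub>A\<^esub>} \<and> reduced_word A B w \<and>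
     (w = [] \<or> \<not> same_factor A B (hd w) x)"
  by (cases w) (auto simp: reduced_word_def same_factor_def)

lemma reduced_word_letters:
  "reduced_word A B w \<Longrightarrow> set w \<subseteq> carrier A \<union> carrier B - {\<one>\<^bsub>A\<^esub>}"
  by (simp add: reduced_word_def)

lemma reduced_word_set: "reduced_word A B w \<Longrightarrow> set w \<subseteq> carrier A \<union> carrier B"
  by (auto simp: reduced_word_def)

lemma fp_cons_one [simp]: "fp_cons A B \<one>\<^bsub>A\<^esub> w = w"
  by (simp add: fp_cons_def)

lemma fp_cons_Nil: "x \<noteq> \<one>\<^bsub>A\<^esub> \<Longrightarrow> fp_cons A B x [] = [x]"
  by (simp add: fp_cons_def)

section \<open>The normal-form free product of two factors meeting in \<open>\<one>\<close>\<close>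

locale free_factors = A: group A + B: group B for A B :: "'a monoid" +
  assumes one_eq: "\<one>\<^bsub>B\<^esub> = \<one>\<^bsub>A\<^esub>"
    and factors_meet: "carrier A \<inter> carrier B = {\<one>\<^bsub>A\<^esub>}"
begin

lemma in_both_factors: "x \<in> carrier A \<Longrightarrow> x \<in> carrier B \<Longrightarrow> x = \<one>\<^bsub>A\<^esub>"
  using factors_meet by blast

text \<open>Statements about a letter of \<open>A\<close>
  are proved once and transferred to letters of \<open>B\<close> through the instance \<open>free_factors B A\<close>,
  using that reduced words and \<open>fp_cons\<close> do not depend on the order of the factors.\<close>

lemma swap: "free_factors B A"
  using factors_meet one_eq by unfold_locales auto

lemma same_factor_A:
  "x \<in> carrier A \<Longrightarrow> x \<noteq> \<one>\<^bsub>A\<^esub> \<Longrightarrow> same_factor A B y x \<longleftrightarrow> y \<in> carrier A"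
  using in_both_factors by (auto simp: same_factor_def)

lemma same_factor_swap: "same_factor B A = same_factor A B"
  by (auto simp: same_factor_def fun_eq_iff)

lemma reduced_word_swap: "reduced_word B A = reduced_word A B"
  by (auto simp: fun_eq_iff reduced_word_def same_factor_swap one_eq)

lemma fp_cons_swap: "fp_cons B A = fp_cons A B"
  using in_both_factors by (auto simp: fun_eq_iff fp_cons_def one_eq split: list.split)

lemma fp_cons_A_same:
  assumes "x \<in> carrier A" "x \<noteq> \<one>\<^bsub>A\<^esub>" "y \<in> carrier A"
  shows "fp_cons A B x (y # w) = (if x \<otimes>\<^bsub>A\<^esub> y = \<one>\<^bsub>A\<^esub> then w else x \<otimes>\<^bsub>A\<^esub> y # w)"
  using assms by (simp add: fp_cons_def Let_def)

lemma fp_cons_A_other: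
  assumes "x \<in> carrier A" "x \<noteq> \<one>\<^bsub>A\<^esub>" "y \<notin> carrier A"
  shows "fp_cons A B x (y # w) = x # y # w"
  using assms in_both_factors by (auto simp: fp_cons_def)

lemma reduced_word_Cons_A:
  "x \<in> carrier A \<Longrightarrow> x \<noteq> \<one>\<^bsub>A\<^esub> \<Longrightarrow>
   reduced_word A B (x # w) \<longleftrightarrow> reduced_word A B w \<and> (w = [] \<or> hd w \<notin> carrier A)"
  by (auto simp: reduced_word_Cons same_factor_A)

lemma fp_cons_reduced_A:
  assumes x: "x \<in> carrier A" and w: "reduced_word A B w"
  shows "reduced_word A B (fp_cons A B x w)"
proof (cases "x = \<one>\<^bsub>A\<^esub>")
  case True
  then show ?thesis using w by simp
next
  case x1: False
  show ?thesis
  proof (cases w)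
    case Nil
    then show ?thesis using x x1 by (simp add: fp_cons_Nil reduced_word_Cons_A)
  next
    case (Cons y w')
    show ?thesis
    proof (cases "y \<in> carrier A")
      case yA: True
      have "y \<noteq> \<one>\<^bsub>A\<^esub>" using w Cons by (simp add: reduced_word_Cons)
      then have tail: "reduced_word A B w' \<and> (w' = [] \<or> hd w' \<notin> carrier A)"
        using w Cons yA by (simp add: reduced_word_Cons_A)
      have "x \<otimes>\<^bsub>A\<^esub> y \<in> carrier A" using x yA by simp
      then show ?thesis
        using Cons x x1 yA tail by (simp add: fp_cons_A_same reduced_word_Cons_A)
    next
      case False
      then show ?thesis using Cons x x1 w by (simp add: fp_cons_A_other reduced_word_Cons_A)
    qed
  qed
qed

lemma fp_cons_reduced:
  assumes x: "x \<in> carrier A \<union> carrier B" and w: "reduced_word A B w"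
  shows "reduced_word A B (fp_cons A B x w)"
proof -
  interpret S: free_factors B A by (rule swap)
  show ?thesis
    using x fp_cons_reduced_A[OF _ w] S.fp_cons_reduced_A[of x w] w by (auto simp: fp_cons_swap reduced_word_swap)
qed

lemma foldr_fp_cons_reduced:
  "set u \<subseteq> carrier A \<union> carrier B \<Longrightarrow> reduced_word A B v \<Longrightarrow>
   reduced_word A B (foldr (fp_cons A B) u v)"
  by (induction u) (auto intro: fp_cons_reduced)

lemma free_product_mult_closed:
  "reduced_word A B u \<Longrightarrow> reduced_word A B v \<Longrightarrow> reduced_word A B (u \<otimes>\<^bsub>free_product A B\<^esub> v)"
  using reduced_word_letters by (auto simp: free_product_def intro!: foldr_fp_cons_reduced)

lemma foldr_fp_cons_Nil: "reduced_word A B u \<Longrightarrow> foldr (fp_cons A B) u [] = u"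
proof (induction u)
  case (Cons x u)
  then have "fp_cons A B x u = x # u"
    using in_both_factors
    by (cases u) (auto simp: reduced_word_Cons fp_cons_def same_factor_def)
  then show ?case using Cons by (simp add: reduced_word_Cons)
qed simp

definition letter_inv :: "'a \<Rightarrow> 'a" where
  "letter_inv x = (if x \<in> carrier A then inv\<^bsub>A\<^esub> x else inv\<^bsub>B\<^esub> x)"

lemma letter_inv_A: "x \<in> carrier A \<Longrightarrow> letter_inv x = inv\<^bsub>A\<^esub> x"
  by (simp add: letter_inv_def)

lemma letter_inv_B: "x \<in> carrier B \<Longrightarrow> letter_inv x = inv\<^bsub>B\<^esub> x"
proof (cases "x \<in> carrier A")
  case True
  assume "x \<in> carrier B"
  then have "x = \<one>\<^bsub>A\<^esub>" using True in_both_factors by blast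
  then show ?thesis using True B.inv_one by (simp add: letter_inv_def one_eq)
qed (simp add: letter_inv_def)

lemma inv_letter_A:
  "x \<in> carrier A \<Longrightarrow> x \<noteq> \<one>\<^bsub>A\<^esub> \<Longrightarrow> inv\<^bsub>A\<^esub> x \<in> carrier A \<and> inv\<^bsub>A\<^esub> x \<noteq> \<one>\<^bsub>A\<^esub>"
  by (metis A.inv_closed A.inv_inv A.inv_one)

lemma letter_inv_letter:
  assumes x: "x \<in> carrier A \<union> carrier B - {\<one>\<^bsub>A\<^esub>}"
  shows "letter_inv x \<in> carrier A \<union> carrier B - {\<one>\<^bsub>A\<^esub>}"
    and "letter_inv x \<in> carrier A \<longleftrightarrow> x \<in> carrier A"
    and "letter_inv x \<in> carrier B \<longleftrightarrow> x \<in> carrier B"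
    and "letter_inv (letter_inv x) = x"
proof -
  interpret S: free_factors B A by (rule swap)
  consider "x \<in> carrier A" "x \<noteq> \<one>\<^bsub>A\<^esub>" | "x \<in> carrier B" "x \<noteq> \<one>\<^bsub>B\<^esub>"
    using x one_eq by auto
  then have "letter_inv x \<in> carrier A \<union> carrier B - {\<one>\<^bsub>A\<^esub>} \<and>
    (letter_inv x \<in> carrier A \<longleftrightarrow> x \<in> carrier A) \<and> (letter_inv x \<in> carrier B \<longleftrightarrow> x \<in> carrier B) \<and>
    letter_inv (letter_inv x) = x"
  proof cases
    case 1
    then show ?thesis
      using inv_letter_A[of x] in_both_factors[of x] in_both_factors[of "inv\<^bsub>A\<^esub> x"]
      by (auto simp: letter_inv_A)
  next
    case 2
    then show ?thesis
      using S.inv_letter_A[of x] in_both_factors[of x] in_both_factors[of "inv\<^bsub>B\<^esub> x"] one_eq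
      by (auto simp: letter_inv_B)
  qed
  then show "letter_inv x \<in> carrier A \<union> carrier B - {\<one>\<^bsub>A\<^esub>}"
    "letter_inv x \<in> carrier A \<longleftrightarrow> x \<in> carrier A" "letter_inv x \<in> carrier B \<longleftrightarrow> x \<in> carrier B"
    "letter_inv (letter_inv x) = x"
    by auto
qed

lemma fp_cons_cancel_A:
  assumes x: "x \<in> carrier A" and m: "reduced_word A B m"
  shows "fp_cons A B (inv\<^bsub>A\<^esub> x) (fp_cons A B x m) = m"
proof (cases "x = \<one>\<^bsub>A\<^esub>")
  case True
  then show ?thesis by simp
next
  case x1: False
  have ix: "inv\<^bsub>A\<^esub> x \<in> carrier A" "inv\<^bsub>A\<^esub> x \<noteq> \<one>\<^bsub>A\<^esub>" using inv_letter_A x x1 by auto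
  show ?thesis
  proof (cases m)
    case Nil
    then show ?thesis using x x1 ix by (simp add: fp_cons_Nil fp_cons_A_same)
  next
    case (Cons y m')
    show ?thesis
    proof (cases "y \<in> carrier A")
      case yA: True
      have "y \<noteq> \<one>\<^bsub>A\<^esub>" using m Cons by (simp add: reduced_word_Cons)
      then have tail: "m' = [] \<or> hd m' \<notin> carrier A"
        using m Cons yA by (simp add: reduced_word_Cons_A)
      show ?thesis
      proof (cases "x \<otimes>\<^bsub>A\<^esub> y = \<one>\<^bsub>A\<^esub>")
        case True
        then have "y = inv\<^bsub>A\<^esub> x" using x yA by (metis A.inv_equality A.inv_comm)
        moreover have "fp_cons A B (inv\<^bsub>A\<^esub> x) m' = inv\<^bsub>A\<^esub> x # m'"
          using tail ix by (cases m') (auto simp: fp_cons_Nil fp_cons_A_other)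
        ultimately show ?thesis using Cons x x1 yA True by (simp add: fp_cons_A_same)
      next
        case False
        have "inv\<^bsub>A\<^esub> x \<otimes>\<^bsub>A\<^esub> (x \<otimes>\<^bsub>A\<^esub> y) = y" using x yA by (simp add: A.m_assoc[symmetric])
        then show ?thesis using Cons x x1 yA False ix \<open>y \<noteq> \<one>\<^bsub>A\<^esub>\<close>
          by (simp add: fp_cons_A_same)
      qed
    next
      case False
      then show ?thesis using Cons x x1 ix by (simp add: fp_cons_A_other fp_cons_A_same)
    qed
  qed
qed

lemma fp_cons_cancel:
  assumes x: "x \<in> carrier A \<union> carrier B" and m: "reduced_word A B m"
  shows "fp_cons A B (letter_inv x) (fp_cons A B x m) = m"
proof -
  interpret S: free_factors B A by (rule swap)
  show ?thesis
    using x fp_cons_cancel_A[OF _ m] S.fp_cons_cancel_A[of x m] m letter_inv_A letter_inv_B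
    by (auto simp: fp_cons_swap reduced_word_swap)
qed

definition word_inv :: "'a list \<Rightarrow> 'a list" where
  "word_inv w = rev (map letter_inv w)"

lemma word_inv_reduced:
  assumes w: "reduced_word A B w"
  shows "reduced_word A B (word_inv w)"
proof -
  have "successively (\<lambda>x y. \<not> same_factor A B x y) w" using w by (simp add: reduced_word_def)
  then have "successively (\<lambda>x y. \<not> same_factor A B (letter_inv y) (letter_inv x)) w"
    by (rule successively_mono)
      (use reduced_word_letters[OF w] letter_inv_letter(2,3) in \<open>auto simp: same_factor_def\<close>)
  then show ?thesis
    using reduced_word_letters[OF w] letter_inv_letter(1)
    by (auto simp: reduced_word_def word_inv_def successively_map)
qed

lemma word_inv_word_inv: "reduced_word A B w \<Longrightarrow> word_inv (word_inv w) = w"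
  using letter_inv_letter(4) reduced_word_letters[of A B w]
  by (simp add: word_inv_def rev_map map_idI subset_iff)

lemma foldr_word_inv_cancel:
  "set w \<subseteq> carrier A \<union> carrier B \<Longrightarrow> reduced_word A B m \<Longrightarrow>
   foldr (fp_cons A B) (word_inv w) (foldr (fp_cons A B) w m) = m"
proof (induction w)
  case (Cons x w)
  then show ?case
    using fp_cons_cancel foldr_fp_cons_reduced by (simp add: word_inv_def)
qed (simp add: word_inv_def)

lemma free_product_inv:
  assumes w: "reduced_word A B w"
  shows "inv\<^bsub>free_product A B\<^esub> w = word_inv w"
proof -
  let ?m = "foldr (fp_cons A B)"
  have wi: "reduced_word A B (word_inv w)" using word_inv_reduced w .
  have left: "?m (word_inv w) w = []"
    using foldr_word_inv_cancel[OF reduced_word_set[OF w], of "[]"] foldr_fp_cons_Nil[OF w] by simp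
  have right: "?m w (word_inv w) = []"
    using foldr_word_inv_cancel[OF reduced_word_set[OF wi], of "[]"] foldr_fp_cons_Nil[OF wi]
    by (simp add: word_inv_word_inv[OF w])
  have unique: "y = word_inv w" if y: "reduced_word A B y" "?m w y = []" for y
  proof -
    have "?m (word_inv w) (?m w y) = y" using foldr_word_inv_cancel[OF reduced_word_set[OF w] y(1)] .
    then show ?thesis using y(2) foldr_fp_cons_Nil[OF wi] by simp
  qed
  show ?thesis
    unfolding m_inv_def
  proof (rule the_equality)
    fix y
    assume "y \<in> carrier (free_product A B) \<and> w \<otimes>\<^bsub>free_product A B\<^esub> y = \<one>\<^bsub>free_product A B\<^esub> \<and>
      y \<otimes>\<^bsub>free_product A B\<^esub> w = \<one>\<^bsub>free_product A B\<^esub>"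
    then show "y = word_inv w" using unique by (simp add: free_product_def)
  qed (use wi left right in \<open>simp add: free_product_def\<close>)
qed

end

section \<open>The letters touched by an evaluation\<close>

fun fp_stages :: "'a monoid \<Rightarrow> 'a monoid \<Rightarrow> 'a list \<Rightarrow> 'a list \<Rightarrow> 'a list list" where
  "fp_stages A B [] v = [v]"
| "fp_stages A B (x # u) v = foldr (fp_cons A B) (x # u) v # fp_stages A B u v"

lemma foldr_in_fp_stages: "foldr (fp_cons A B) u v \<in> set (fp_stages A B u v)"
  by (cases u) auto

text \<open>The letters occurring while a term, resp. a quantifier-free formula, is evaluated in
  the free product under the assignment \<open>\<rho>\<close>: the letters of the values of variables, of all
  intermediate words of every product, and of the letterwise inverses.  This finite set is
  all a partial isomorphism needs to see to transfer the evaluation.\<close>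

fun term_letters :: "'a monoid \<Rightarrow> 'a monoid \<Rightarrow> (nat \<Rightarrow> 'a list) \<Rightarrow> gterm \<Rightarrow> 'a set" where
  "term_letters A B \<rho> (GVar n) = set (\<rho> n)"
| "term_letters A B \<rho> GOne = {}"
| "term_letters A B \<rho> (GMul s t) = term_letters A B \<rho> s \<union> term_letters A B \<rho> t \<union>
     \<Union> (set ` set (fp_stages A B (geval (free_product A B) \<rho> s) (geval (free_product A B) \<rho> t)))"
| "term_letters A B \<rho> (GInv t) =
     term_letters A B \<rho> t \<union> free_factors.letter_inv A B ` set (geval (free_product A B) \<rho> t)"

fun formula_letters :: "'a monoid \<Rightarrow> 'a monoid \<Rightarrow> (nat \<Rightarrow> 'a list) \<Rightarrow> gqf \<Rightarrow> 'a set" where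
  "formula_letters A B \<rho> (GEq s t) = term_letters A B \<rho> s \<union> term_letters A B \<rho> t"
| "formula_letters A B \<rho> (GNeg \<phi>) = formula_letters A B \<rho> \<phi>"
| "formula_letters A B \<rho> (GConj \<phi> \<psi>) = formula_letters A B \<rho> \<phi> \<union> formula_letters A B \<rho> \<psi>"
| "formula_letters A B \<rho> (GDisj \<phi> \<psi>) = formula_letters A B \<rho> \<phi> \<union> formula_letters A B \<rho> \<psi>"

lemma finite_term_letters: "finite (term_letters A B \<rho> t)"
  by (induction t) auto

lemma finite_formula_letters: "finite (formula_letters A B \<rho> \<phi>)"
  by (induction \<phi>) (auto simp: finite_term_letters)

context free_factors
begin

lemma geval_reduced:
  "\<forall>n. reduced_word A B (\<rho> n) \<Longrightarrow> reduced_word A B (geval (free_product A B) \<rho> t)"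
proof (induction t)
  case (GMul s t)
  then show ?case using free_product_mult_closed by simp
next
  case (GInv t)
  then show ?case using free_product_inv word_inv_reduced by simp
qed (auto simp: free_product_def)

lemma geval_letters:
  "\<forall>n. reduced_word A B (\<rho> n) \<Longrightarrow> set (geval (free_product A B) \<rho> t) \<subseteq> term_letters A B \<rho> t"
proof (induction t)
  case (GMul s t)
  then show ?case using foldr_in_fp_stages[of A B] by (auto simp: free_product_def)
next
  case (GInv t)
  then show ?case using free_product_inv geval_reduced by (auto simp: word_inv_def)
qed (auto simp: free_product_def)

lemma fp_stages_reduced:
  "set u \<subseteq> carrier A \<union> carrier B \<Longrightarrow> reduced_word A B v \<Longrightarrow>
   s \<in> set (fp_stages A B u v) \<Longrightarrow> reduced_word A B s"
  by (induction u) (auto intro: foldr_fp_cons_reduced fp_cons_reduced)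

lemma term_letters_subset:
  assumes \<rho>: "\<forall>n. reduced_word A B (\<rho> n)"
  shows "term_letters A B \<rho> t \<subseteq> carrier A \<union> carrier B"
proof (induction t)
  case (GVar n)
  then show ?case using reduced_word_set \<rho> by auto
next
  case (GMul s t)
  have "set w \<subseteq> carrier A \<union> carrier B"
    if "w \<in> set (fp_stages A B (geval (free_product A B) \<rho> s) (geval (free_product A B) \<rho> t))" for w
    using fp_stages_reduced[OF _ _ that] geval_reduced[OF \<rho>] reduced_word_set by blast
  then show ?case using GMul by auto
next
  case (GInv t)
  have "set (geval (free_product A B) \<rho> t) \<subseteq> carrier A \<union> carrier B - {\<one>\<^bsub>A\<^esub>}"
    using geval_reduced[OF \<rho>] reduced_word_letters by blast
  then show ?case using GInv letter_inv_letter(1) by auto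
qed simp

lemma formula_letters_subset:
  "\<forall>n. reduced_word A B (\<rho> n) \<Longrightarrow> formula_letters A B \<rho> \<phi> \<subseteq> carrier A \<union> carrier B"
  by (induction \<phi>) (auto dest: term_letters_subset)

end

section \<open>Transferring evaluations along a letter map\<close>

locale letter_transfer = F1: free_factors A1 B1 + F2: free_factors A2 B2
  for A1 B1 :: "'a monoid" and A2 B2 :: "'b monoid" +
  fixes h :: "'a \<Rightarrow> 'b" and D :: "'a set"
  assumes letters: "D \<subseteq> carrier A1 \<union> carrier B1"
    and one_in: "\<one>\<^bsub>A1\<^esub> \<in> D"
    and maps_one: "h \<one>\<^bsub>A1\<^esub> = \<one>\<^bsub>A2\<^esub>"
    and inj: "inj_on h D"
    and factor_A: "x \<in> D \<Longrightarrow> h x \<in> carrier A2 \<longleftrightarrow> x \<in> carrier A1"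
    and factor_B: "x \<in> D \<Longrightarrow> h x \<in> carrier B2 \<longleftrightarrow> x \<in> carrier B1"
    and mult_A: "\<lbrakk>x \<in> D; y \<in> D; x \<in> carrier A1; y \<in> carrier A1; x \<otimes>\<^bsub>A1\<^esub> y \<in> D\<rbrakk>
       \<Longrightarrow> h (x \<otimes>\<^bsub>A1\<^esub> y) = h x \<otimes>\<^bsub>A2\<^esub> h y"
    and mult_B: "\<lbrakk>x \<in> D; y \<in> D; x \<in> carrier B1; y \<in> carrier B1; x \<otimes>\<^bsub>B1\<^esub> y \<in> D\<rbrakk>
       \<Longrightarrow> h (x \<otimes>\<^bsub>B1\<^esub> y) = h x \<otimes>\<^bsub>B2\<^esub> h y"
    and inv_A: "\<lbrakk>x \<in> D; x \<in> carrier A1; inv\<^bsub>A1\<^esub> x \<in> D\<rbrakk> \<Longrightarrow> h (inv\<^bsub>A1\<^esub> x) = inv\<^bsub>A2\<^esub> (h x)"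
    and inv_B: "\<lbrakk>x \<in> D; x \<in> carrier B1; inv\<^bsub>B1\<^esub> x \<in> D\<rbrakk> \<Longrightarrow> h (inv\<^bsub>B1\<^esub> x) = inv\<^bsub>B2\<^esub> (h x)"
begin

lemma swap: "letter_transfer B1 A1 B2 A2 h D"
  using F1.swap F2.swap letters one_in maps_one inj factor_A factor_B mult_A mult_B inv_A inv_B
    F1.one_eq F2.one_eq
  by (simp add: letter_transfer_def letter_transfer_axioms_def) blast

lemma maps_one_iff: "x \<in> D \<Longrightarrow> h x = \<one>\<^bsub>A2\<^esub> \<longleftrightarrow> x = \<one>\<^bsub>A1\<^esub>"
  using inj one_in maps_one by (metis inj_on_def)

lemma map_fp_cons_A:
  assumes x: "x \<in> D" "x \<in> carrier A1" and w: "set w \<subseteq> D"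
    and result: "set (fp_cons A1 B1 x w) \<subseteq> D"
  shows "map h (fp_cons A1 B1 x w) = fp_cons A2 B2 (h x) (map h w)"
proof (cases "x = \<one>\<^bsub>A1\<^esub>")
  case True
  then show ?thesis using maps_one by simp
next
  case x1: False
  have hx: "h x \<in> carrier A2" "h x \<noteq> \<one>\<^bsub>A2\<^esub>" using x x1 factor_A maps_one_iff by auto
  show ?thesis
  proof (cases w)
    case Nil
    then show ?thesis using x1 hx by (simp add: fp_cons_Nil)
  next
    case (Cons y w')
    have y: "y \<in> D" using w Cons by simp
    show ?thesis
    proof (cases "y \<in> carrier A1")
      case yA: True
      let ?z = "x \<otimes>\<^bsub>A1\<^esub> y"
      have expand: "fp_cons A1 B1 x w = (if ?z = \<one>\<^bsub>A1\<^esub> then w' else ?z # w')"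
        using x x1 yA Cons by (simp add: F1.fp_cons_A_same)
      have z: "?z \<in> D" using result expand one_in by (cases "?z = \<one>\<^bsub>A1\<^esub>") auto
      have "h ?z = h x \<otimes>\<^bsub>A2\<^esub> h y" using mult_A x y yA z by simp
      then show ?thesis
        using expand hx y yA factor_A Cons maps_one_iff[OF z] by (simp add: F2.fp_cons_A_same)
    next
      case False
      then show ?thesis using x x1 hx y factor_A Cons by (simp add: F1.fp_cons_A_other F2.fp_cons_A_other)
    qed
  qed
qed

lemma map_fp_cons:
  assumes x: "x \<in> D" and w: "set w \<subseteq> D" and result: "set (fp_cons A1 B1 x w) \<subseteq> D"
  shows "map h (fp_cons A1 B1 x w) = fp_cons A2 B2 (h x) (map h w)"
proof -
  interpret S: letter_transfer B1 A1 B2 A2 h D by (rule swap)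
  show ?thesis
    using x letters map_fp_cons_A[OF x _ w result] S.map_fp_cons_A[OF x _ w] result
    by (auto simp: F1.fp_cons_swap F2.fp_cons_swap)
qed

lemma map_reduced:
  assumes w: "reduced_word A1 B1 w" and wD: "set w \<subseteq> D"
  shows "reduced_word A2 B2 (map h w)"
proof -
  have "set (map h w) \<subseteq> carrier A2 \<union> carrier B2 - {\<one>\<^bsub>A2\<^esub>}"
    using reduced_word_letters[OF w] wD factor_A factor_B maps_one_iff by fastforce
  moreover have "successively (\<lambda>x y. \<not> same_factor A2 B2 (h x) (h y)) w"
    using w unfolding reduced_word_def
    by (auto elim!: successively_mono simp: same_factor_def factor_A factor_B wD[THEN subsetD])
  ultimately show ?thesis by (simp add: reduced_word_def successively_map)
qed

lemma map_foldr_fp_cons: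
  "set u \<subseteq> D \<Longrightarrow> (\<forall>s\<in>set (fp_stages A1 B1 u v). set s \<subseteq> D) \<Longrightarrow>
   map h (foldr (fp_cons A1 B1) u v) = foldr (fp_cons A2 B2) (map h u) (map h v)"
proof (induction u)
  case (Cons x u)
  have stages: "\<forall>s\<in>set (fp_stages A1 B1 u v). set s \<subseteq> D" using Cons.prems by (cases u) auto
  then have "set (foldr (fp_cons A1 B1) u v) \<subseteq> D" using foldr_in_fp_stages by blast
  then show ?case using map_fp_cons Cons.prems Cons.IH[OF _ stages] by simp
qed simp

lemma map_letter_inv:
  assumes "x \<in> D" "F1.letter_inv x \<in> D"
  shows "h (F1.letter_inv x) = F2.letter_inv (h x)"
proof (cases "x \<in> carrier A1")
  case True
  then show ?thesis using assms inv_A factor_A F1.letter_inv_A F2.letter_inv_A by simp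
next
  case False
  then have "x \<in> carrier B1" using assms letters by blast
  then show ?thesis using assms inv_B factor_B F1.letter_inv_B F2.letter_inv_B by simp
qed

lemma map_word_inv:
  "set w \<subseteq> D \<Longrightarrow> F1.letter_inv ` set w \<subseteq> D \<Longrightarrow> map h (F1.word_inv w) = F2.word_inv (map h w)"
  unfolding F1.word_inv_def F2.word_inv_def by (induction w) (auto simp: map_letter_inv)

text \<open>The assignment transported along \<open>h\<close>; variables whose values leave \<open>D\<close> are irrelevant
  and sent to the identity.\<close>

definition transfer_assignment :: "(nat \<Rightarrow> 'a list) \<Rightarrow> nat \<Rightarrow> 'b list" where
  "transfer_assignment \<rho> n = (if set (\<rho> n) \<subseteq> D then map h (\<rho> n) else [])"

lemma transfer_assignment_reduced:
  "\<forall>n. reduced_word A1 B1 (\<rho> n) \<Longrightarrow> reduced_word A2 B2 (transfer_assignment \<rho> n)"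
  by (simp add: transfer_assignment_def map_reduced)

lemma geval_transfer:
  assumes \<rho>: "\<forall>n. reduced_word A1 B1 (\<rho> n)"
  shows "term_letters A1 B1 \<rho> t \<subseteq> D \<Longrightarrow>
    geval (free_product A2 B2) (transfer_assignment \<rho>) t = map h (geval (free_product A1 B1) \<rho> t)"
proof (induction t)
  case (GVar n)
  then show ?case by (simp add: transfer_assignment_def)
next
  case GOne
  then show ?case by (simp add: free_product_def)
next
  case (GMul s t)
  let ?u = "geval (free_product A1 B1) \<rho> s" and ?v = "geval (free_product A1 B1) \<rho> t"
  have "set ?u \<subseteq> D" using F1.geval_letters[OF \<rho>] GMul.prems by fastforce
  moreover have "\<forall>x\<in>set (fp_stages A1 B1 ?u ?v). set x \<subseteq> D" using GMul.prems by auto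
  ultimately have "map h (foldr (fp_cons A1 B1) ?u ?v) = foldr (fp_cons A2 B2) (map h ?u) (map h ?v)"
    by (rule map_foldr_fp_cons)
  then show ?case using GMul by (simp add: free_product_def)
next
  case (GInv t)
  let ?w = "geval (free_product A1 B1) \<rho> t"
  have w: "reduced_word A1 B1 ?w" using F1.geval_reduced[OF \<rho>] .
  have wD: "set ?w \<subseteq> D" using F1.geval_letters[OF \<rho>] GInv.prems by fastforce
  show ?case
    using GInv F1.free_product_inv[OF w] F2.free_product_inv[OF map_reduced[OF w wD]]
      map_word_inv[OF wD]
    by simp
qed

lemma gsat_transfer:
  assumes \<rho>: "\<forall>n. reduced_word A1 B1 (\<rho> n)"
  shows "formula_letters A1 B1 \<rho> \<phi> \<subseteq> D \<Longrightarrow>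
    gsat (free_product A2 B2) (transfer_assignment \<rho>) \<phi> \<longleftrightarrow> gsat (free_product A1 B1) \<rho> \<phi>"
proof (induction \<phi>)
  case (GEq s t)
  let ?u = "geval (free_product A1 B1) \<rho> s" and ?v = "geval (free_product A1 B1) \<rho> t"
  have "set ?u \<union> set ?v \<subseteq> D" using F1.geval_letters[OF \<rho>] GEq.prems by fastforce
  then have "inj_on h (set ?u \<union> set ?v)" using inj_on_subset[OF inj] by blast
  then show ?case using GEq geval_transfer[OF \<rho>] by (simp add: inj_on_map_eq_map)
qed simp_all

end

section \<open>Gluing partial isomorphisms and the main theorem\<close>

text \<open>They agree on \<open>\<one>\<close>,
  and since both send only \<open>\<one>\<close> to \<open>\<one>\<close>, the glued map keeps the two factors apart.\<close>

lemma glue_partial_isos: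
  assumes F1: "free_factors A1 B1" and F2: "free_factors A2 B2"
    and D: "D \<subseteq> carrier A1 \<union> carrier B1" "\<one>\<^bsub>A1\<^esub> \<in> D"
    and pa: "partial_iso A1 A2 (D \<inter> carrier A1) TA fa"
    and pb: "partial_iso B1 B2 (D \<inter> carrier B1) TB fb"
  shows "letter_transfer A1 B1 A2 B2 (\<lambda>x. if x \<in> carrier A1 then fa x else fb x) D"
proof -
  interpret F1: free_factors A1 B1 by (rule F1)
  interpret F2: free_factors A2 B2 by (rule F2)
  define h where "h x = (if x \<in> carrier A1 then fa x else fb x)" for x
  have injA: "inj_on fa (D \<inter> carrier A1)" and imA: "fa ` (D \<inter> carrier A1) \<subseteq> carrier A2"
    and prA: "preserves_on A1 A2 (D \<inter> carrier A1) fa"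
    using pa by (auto simp: partial_iso_def bij_betw_def)
  have injB: "inj_on fb (D \<inter> carrier B1)" and imB: "fb ` (D \<inter> carrier B1) \<subseteq> carrier B2"
    and prB: "preserves_on B1 B2 (D \<inter> carrier B1) fb"
    using pb by (auto simp: partial_iso_def bij_betw_def)
  have oneA: "\<one>\<^bsub>A1\<^esub> \<in> D \<inter> carrier A1" and oneB: "\<one>\<^bsub>A1\<^esub> \<in> D \<inter> carrier B1"
    using D F1.one_eq F1.A.one_closed F1.B.one_closed by auto
  have fa1: "fa \<one>\<^bsub>A1\<^esub> = \<one>\<^bsub>A2\<^esub>" using prA oneA by (simp add: preserves_on_def)
  have fb1: "fb \<one>\<^bsub>A1\<^esub> = \<one>\<^bsub>A2\<^esub>" using prB oneB F1.one_eq F2.one_eq by (simp add: preserves_on_def)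
  have hA: "h x = fa x" "fa x \<in> carrier A2" "fa x = \<one>\<^bsub>A2\<^esub> \<longleftrightarrow> x = \<one>\<^bsub>A1\<^esub>"
    if "x \<in> D \<inter> carrier A1" for x
    using that imA injA oneA fa1 by (auto simp: h_def inj_on_def)
  have hB: "h x = fb x" "fb x \<in> carrier B2" "fb x = \<one>\<^bsub>A2\<^esub> \<longleftrightarrow> x = \<one>\<^bsub>A1\<^esub>"
    if "x \<in> D \<inter> carrier B1" for x
    using that imB injB oneB fb1 fa1 F1.in_both_factors by (auto simp: h_def inj_on_def)
  have factor_A: "h x \<in> carrier A2 \<longleftrightarrow> x \<in> carrier A1" if x: "x \<in> D" for x
  proof (cases "x \<in> carrier A1")
    case False
    then have "x \<in> D \<inter> carrier B1" "x \<noteq> \<one>\<^bsub>A1\<^esub>" using x D by auto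
    then show ?thesis using False hB F2.in_both_factors by metis
  qed (use hA x in auto)
  have factor_B: "h x \<in> carrier B2 \<longleftrightarrow> x \<in> carrier B1" if x: "x \<in> D" for x
  proof (cases "x \<in> carrier B1")
    case False
    then have "x \<in> D \<inter> carrier A1" "x \<noteq> \<one>\<^bsub>A1\<^esub>" using x D oneB by auto
    then show ?thesis using False hA F2.in_both_factors by metis
  qed (use hB x in auto)
  have "inj_on h D"
  proof (rule inj_onI)
    fix x y assume x: "x \<in> D" and y: "y \<in> D" and eq: "h x = h y"
    then have same: "x \<in> carrier A1 \<longleftrightarrow> y \<in> carrier A1" using factor_A by metis
    show "x = y"
    proof (cases "x \<in> carrier A1")
      case True
      then show ?thesis using x y eq same hA(1) injA by (auto dest: inj_onD)
    next
      case False
      then have "x \<in> D \<inter> carrier B1" "y \<in> D \<inter> carrier B1" using x y same D by auto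
      then show ?thesis using eq hB(1) injB by (auto dest: inj_onD)
    qed
  qed
  moreover have "h \<one>\<^bsub>A1\<^esub> = \<one>\<^bsub>A2\<^esub>" using hA oneA fa1 by simp
  ultimately have "letter_transfer A1 B1 A2 B2 h D"
    using D factor_A factor_B hA(1) hB(1) prA prB
    by unfold_locales (auto simp: preserves_on_def)
  then show ?thesis by (simp add: h_def[abs_def])
qed

lemma ex_holds_transfer:
  assumes F1: "free_factors A1 B1" and F2: "free_factors A2 B2"
    and fin_A: "\<forall>S. S \<subseteq> carrier A1 \<and> finite S \<longrightarrow> (\<exists>T f. partial_iso A1 A2 S T f)"
    and fin_B: "\<forall>S. S \<subseteq> carrier B1 \<and> finite S \<longrightarrow> (\<exists>T f. partial_iso B1 B2 S T f)"
    and ex: "ex_holds (free_product A1 B1) \<phi>"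
  shows "ex_holds (free_product A2 B2) \<phi>"
proof -
  interpret F1: free_factors A1 B1 by (rule F1)
  obtain \<rho> where \<rho>: "\<forall>n. reduced_word A1 B1 (\<rho> n)" and sat: "gsat (free_product A1 B1) \<rho> \<phi>"
    using ex by (auto simp: ex_holds_def free_product_def)
  define D where "D = insert \<one>\<^bsub>A1\<^esub> (formula_letters A1 B1 \<rho> \<phi>)"
  have D: "finite D" "D \<subseteq> carrier A1 \<union> carrier B1" "\<one>\<^bsub>A1\<^esub> \<in> D"
    using finite_formula_letters F1.formula_letters_subset[OF \<rho>] by (auto simp: D_def)
  obtain TA fa where "partial_iso A1 A2 (D \<inter> carrier A1) TA fa" using fin_A D by blast
  moreover obtain TB fb where "partial_iso B1 B2 (D \<inter> carrier B1) TB fb" using fin_B D by blast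
  ultimately obtain h where "letter_transfer A1 B1 A2 B2 h D"
    using glue_partial_isos[OF F1 F2 D(2,3)] by blast
  then interpret T: letter_transfer A1 B1 A2 B2 h D .
  have "gsat (free_product A2 B2) (T.transfer_assignment \<rho>) \<phi>"
    using T.gsat_transfer[OF \<rho>] sat by (simp add: D_def subset_insertI)
  moreover have "\<forall>n. T.transfer_assignment \<rho> n \<in> carrier (free_product A2 B2)"
    using T.transfer_assignment_reduced[OF \<rho>] by (simp add: free_product_def)
  ultimately show ?thesis by (auto simp: ex_holds_def)
qed

theorem mainTheorem6:
  fixes A1 B1 :: "'a monoid" and A2 B2 :: "'b monoid"
  assumes "group A1" and "group B1" and "group A2" and "group B2"
    and "\<one>\<^bsub>B1\<^esub> = \<one>\<^bsub>A1\<^esub>" and "carrier A1 \<inter> carrier B1 = {\<one>\<^bsub>A1\<^esub>}"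
    and "\<one>\<^bsub>B2\<^esub> = \<one>\<^bsub>A2\<^esub>" and "carrier A2 \<inter> carrier B2 = {\<one>\<^bsub>A2\<^esub>}"
    and "fin_equiv A1 A2" and "fin_equiv B1 B2"
  shows "existentially_equivalent (free_product A1 B1) (free_product A2 B2)"
proof -
  have F1: "free_factors A1 B1" and F2: "free_factors A2 B2"
    using assms by (simp_all add: free_factors_def free_factors_axioms_def)
  show ?thesis
    unfolding existentially_equivalent_def
    using ex_holds_transfer[OF F1 F2] ex_holds_transfer[OF F2 F1] assms(9,10)
    by (auto simp: fin_equiv_def)
qed

end
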